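(* Let $n,m,k$ be positive integers with $m\le n$. Let $W=(w_{ij})_{i,j=1}^m$ be a weighing matrix of order $m$ and weight $k$, and let $K_{i,j}$ ($i,j\in\{1,\ldots,m\}$) be $n\times n$ monomial $(0,1)$-matrices such that $\sum_{l=1}^mK_{i,l}K_{j,l}^\top$ is a $(0,1)$-matrix for all distinct $i,j$. For $i\in\{1,\ldots,m\}$ let $W_i$ be the $nm\times nm$ block matrix whose $(a,b)$-block is $w_{ab}K_{i,b}$ ($a,b\in\{1,\ldots,m\}$). Then (1) each $W_i$ is a weighing matrix of order $nm$ and weight $k$; (2) $W_1,\ldots,W_m$ are mutually quasi-unbiased weighing matrices for the parameters $(nm,k,k^2,1)$.
   Context: A weighing matrix of order $n$ and weight $k$ is an $n\times n$ $(0,1,-1)$-matrix $W$ with $WW^\top=kI_n$. A monomial $(0,1)$-matrix is a permutation matrix. Weighing matrices $W_1,W_2$ of order $n$ and weight $k$ are quasi-unbiased for parameters $(n,k,l,a)$ if $\frac1{\sqrt a}W_1W_2^\top$ is a weighing matrix of order $n$ and weight $l$; mutually quasi-unbiased means pairwise quasi-unbiased. *)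

theory Defs
  imports "Jordan_Normal_Form.Matrix"
begin

definition weighing_matrix :: "nat \<Rightarrow> nat \<Rightarrow> 'a::comm_ring_1 mat \<Rightarrow> bool" where
  "weighing_matrix n k W \<longleftrightarrow>
     W \<in> carrier_mat n n \<and>
     (\<forall>i<n. \<forall>j<n. W $$ (i,j) \<in> {0, 1, -1}) \<and>
     W * transpose_mat W = of_nat k \<cdot>\<^sub>m 1\<^sub>m n"

definition zero_one_mat :: "'a::zero_neq_one mat \<Rightarrow> bool" where
  "zero_one_mat A \<longleftrightarrow> (\<forall>i<dim_row A. \<forall>j<dim_col A. A $$ (i,j) \<in> {0, 1})"

text \<open>Monomial (0,1)-matrix = permutation matrix: an n x n (0,1)-matrix with exactly
one 1 in every row and every column.\<close>
definition perm_matrix :: "nat \<Rightarrow> 'a::zero_neq_one mat \<Rightarrow> bool" where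
  "perm_matrix n P \<longleftrightarrow>
     P \<in> carrier_mat n n \<and> zero_one_mat P \<and>
     (\<forall>i<n. \<exists>!j. j < n \<and> P $$ (i,j) = 1) \<and>
     (\<forall>j<n. \<exists>!i. i < n \<and> P $$ (i,j) = 1)"

definition quasi_unbiased :: "nat \<Rightarrow> nat \<Rightarrow> nat \<Rightarrow> nat \<Rightarrow> int mat \<Rightarrow> int mat \<Rightarrow> bool" where
  "quasi_unbiased n k l a W1 W2 \<longleftrightarrow>
     weighing_matrix n k W1 \<and> weighing_matrix n k W2 \<and>
     weighing_matrix n l ((1 / sqrt (real a)) \<cdot>\<^sub>m
        (map_mat real_of_int W1 * transpose_mat (map_mat real_of_int W2)))"

definition block_W :: "nat \<Rightarrow> nat \<Rightarrow> int mat \<Rightarrow> (nat \<Rightarrow> nat \<Rightarrow> int mat) \<Rightarrow> nat \<Rightarrow> int mat" where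
  "block_W n m W K i = mat (n*m) (n*m)
     (\<lambda>(p,q). W $$ (p div n, q div n) * K i (q div n) $$ (p mod n, q mod n))"

end

theory Submission
  imports Defs "Jordan_Normal_Form.Determinant"
begin

text \<open>
  The (a,a')-block of W_i W_j^T is the sum over b of w_ab w_a'b K_ib K_jb^T.  For i = j each
  K_ib K_ib^T is the identity, so the block is (W W^T)_aa' I = k \<delta>_aa' I.  For i \<noteq> j the
  matrices K_ib K_jb^T are nonnegative with a (0,1) sum, and |w_ab w_a'b| \<le> 1, so every entry
  of W_i W_j^T lies in {0, 1, -1}.  Over a field W_j W_j^T = k I forces W_j^T W_j = k I, whence
  (W_i W_j^T)(W_i W_j^T)^T = k^2 I.
\<close>

lemma mult_transpose_mat_index:
  assumes "A \<in> carrier_mat nr n" "B \<in> carrier_mat nc n" "i < nr" "j < nc"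
  shows "(A * transpose_mat B) $$ (i, j) = (\<Sum>l<n. A $$ (i, l) * B $$ (j, l))"
  using assms by (simp add: scalar_prod_def atLeast0LessThan)

lemma sum_lessThan_mult_blocks:
  fixes g :: "nat \<Rightarrow> 'a::comm_monoid_add"
  shows "(\<Sum>q<m * n. g q) = (\<Sum>b<m. \<Sum>s<n. g (b * n + s))"
proof -
  have "sum g {b * n..<b * n + n} = (\<Sum>s<n. g (b * n + s))" for b
    using sum.shift_bounds_nat_ivl[of g 0 "b * n" n] by (simp add: atLeast0LessThan add.commute)
  then show ?thesis
    by (simp add: sum.nat_group[symmetric])
qed

lemma perm_matrix_carrier: "perm_matrix n P \<Longrightarrow> P \<in> carrier_mat n n"
  by (simp add: perm_matrix_def)

lemma perm_matrix_entry_01: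
  "perm_matrix n P \<Longrightarrow> i < n \<Longrightarrow> j < n \<Longrightarrow> P $$ (i, j) \<in> {0, 1}"
  unfolding perm_matrix_def zero_one_mat_def by (metis carrier_matD)

lemma perm_matrix_mult_transpose:
  fixes P :: "'a::semiring_1 mat"
  assumes "perm_matrix n P"
  shows "P * transpose_mat P = 1\<^sub>m n"
proof (rule eq_matI)
  have P: "P \<in> carrier_mat n n"
    using assms by (rule perm_matrix_carrier)
  have row: "\<And>i. i < n \<Longrightarrow> \<exists>!j. j < n \<and> P $$ (i, j) = 1"
    and col: "\<And>j. j < n \<Longrightarrow> \<exists>!i. i < n \<and> P $$ (i, j) = 1"
    using assms by (auto simp: perm_matrix_def)
  have entry_0: "P $$ (i, j) = 0" if "i < n" "j < n" "P $$ (i, j) \<noteq> 1" for i j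
    using perm_matrix_entry_01[OF assms that(1,2)] that(3) by simp
  fix r r' assume "r < dim_row (1\<^sub>m n :: 'a mat)" "r' < dim_col (1\<^sub>m n :: 'a mat)"
  then have r: "r < n" "r' < n" by auto
  obtain j where j: "j < n" "P $$ (r, j) = 1"
    using row[OF r(1)] by blast
  have row_r: "P $$ (r, s) = (if s = j then 1 else 0)" if "s < n" for s
  proof (cases "s = j")
    case False
    then have "P $$ (r, s) \<noteq> 1" using row[OF r(1)] j that by blast
    with False show ?thesis using entry_0 r(1) that by simp
  qed (simp add: j)
  have "(P * transpose_mat P) $$ (r, r') = (\<Sum>s<n. (if s = j then 1 else 0) * P $$ (r', s))"
    by (simp add: mult_transpose_mat_index[OF P P r] row_r)
  also have "\<dots> = (\<Sum>s<n. if s = j then P $$ (r', s) else 0)"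
    by (intro sum.cong) auto
  also have "\<dots> = P $$ (r', j)"
    using j(1) by (simp add: sum.delta)
  also have "\<dots> = (if r = r' then 1 else 0)"
  proof (cases "r = r'")
    case False
    then have "P $$ (r', j) \<noteq> 1" using col[OF j(1)] j r by blast
    with False show ?thesis using entry_0 r(2) j(1) by simp
  qed (use j in simp)
  finally show "(P * transpose_mat P) $$ (r, r') = 1\<^sub>m n $$ (r, r')"
    using r by simp
qed (use perm_matrix_carrier[OF assms] in auto)

lemma block_W_carrier: "block_W n m W K i \<in> carrier_mat (n * m) (n * m)"
  by (simp add: block_W_def)

lemma block_W_index:
  "p < n * m \<Longrightarrow> q < n * m \<Longrightarrow>
    block_W n m W K i $$ (p, q) = W $$ (p div n, q div n) * K i (q div n) $$ (p mod n, q mod n)"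
  by (simp add: block_W_def)

lemma div_less_of_less_mult: "(p::nat) < n * m \<Longrightarrow> p div n < m"
  by (simp add: less_mult_imp_div_less mult.commute)

lemma mod_less_of_less_mult: "(p::nat) < n * m \<Longrightarrow> p mod n < n"
  by (cases "n = 0") auto

lemma div_mod_eq_iff: "(p::nat) = p' \<longleftrightarrow> p div n = p' div n \<and> p mod n = p' mod n"
  by (metis div_mult_mod_eq)

lemma block_W_mult_transpose_index:
  assumes Ki: "\<And>b. b < m \<Longrightarrow> K i b \<in> carrier_mat n n"
    and Kj: "\<And>b. b < m \<Longrightarrow> K j b \<in> carrier_mat n n"
    and p: "p < n * m" and p': "p' < n * m"
  shows "(block_W n m W K i * transpose_mat (block_W n m W K j)) $$ (p, p') =
    (\<Sum>b<m. W $$ (p div n, b) * W $$ (p' div n, b) *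
       (K i b * transpose_mat (K j b)) $$ (p mod n, p' mod n))"
proof -
  have n: "0 < n" using p by (cases n) auto
  have r: "p mod n < n" "p' mod n < n"
    using p p' by (auto intro: mod_less_of_less_mult)
  have entry: "block_W n m W K i $$ (p, b * n + s) * block_W n m W K j $$ (p', b * n + s) =
      W $$ (p div n, b) * W $$ (p' div n, b) * (K i b $$ (p mod n, s) * K j b $$ (p' mod n, s))"
    if "b < m" "s < n" for b s
  proof -
    have "b * n + s < (b + 1) * n" using that by simp
    also have "\<dots> \<le> m * n" using that by (intro mult_le_mono1) simp
    also have "\<dots> = n * m" by simp
    finally have q: "b * n + s < n * m" .
    have "(b * n + s) div n = b" "(b * n + s) mod n = s" using that n by auto
    then show ?thesis
      unfolding block_W_index[OF p q] block_W_index[OF p' q] by (simp add: mult_ac)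
  qed
  have "(block_W n m W K i * transpose_mat (block_W n m W K j)) $$ (p, p') =
      (\<Sum>q<m * n. block_W n m W K i $$ (p, q) * block_W n m W K j $$ (p', q))"
    by (simp add: mult_transpose_mat_index[OF block_W_carrier block_W_carrier p p'] mult.commute[of n m])
  also have "\<dots> = (\<Sum>b<m. \<Sum>s<n. W $$ (p div n, b) * W $$ (p' div n, b) *
       (K i b $$ (p mod n, s) * K j b $$ (p' mod n, s)))"
    unfolding sum_lessThan_mult_blocks by (intro sum.cong refl entry) auto
  also have "\<dots> = (\<Sum>b<m. W $$ (p div n, b) * W $$ (p' div n, b) *
       (K i b * transpose_mat (K j b)) $$ (p mod n, p' mod n))"
    by (intro sum.cong refl) (simp add: mult_transpose_mat_index[OF Ki Kj r] sum_distrib_left)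
  finally show ?thesis .
qed

lemma weighing_matrix_block_W:
  assumes W: "weighing_matrix m k W" and K: "\<And>b. b < m \<Longrightarrow> perm_matrix n (K i b)"
  shows "weighing_matrix (n * m) k (block_W n m W K i)"
  unfolding weighing_matrix_def
proof (intro conjI allI impI block_W_carrier)
  fix p q assume p: "p < n * m" and q: "q < n * m"
  have "W $$ (p div n, q div n) \<in> {0, 1, -1}"
    using W p q by (simp add: weighing_matrix_def div_less_of_less_mult)
  moreover have "K i (q div n) $$ (p mod n, q mod n) \<in> {0, 1}"
    using p q by (intro perm_matrix_entry_01[where n = n] K div_less_of_less_mult mod_less_of_less_mult)
  ultimately show "block_W n m W K i $$ (p, q) \<in> {0, 1, -1}"
    by (auto simp: block_W_index[OF p q])
next
  have Wc: "W \<in> carrier_mat m m" and WW: "W * transpose_mat W = of_nat k \<cdot>\<^sub>m 1\<^sub>m m"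
    using W by (auto simp: weighing_matrix_def)
  have Kc: "K i b \<in> carrier_mat n n" if "b < m" for b
    using K[OF that] by (rule perm_matrix_carrier)
  have KK: "K i b * transpose_mat (K i b) = 1\<^sub>m n" if "b < m" for b
    using K[OF that] by (rule perm_matrix_mult_transpose)
  show "block_W n m W K i * transpose_mat (block_W n m W K i) = of_nat k \<cdot>\<^sub>m 1\<^sub>m (n * m)"
  proof (rule eq_matI)
    fix p p' assume "p < dim_row (of_nat k \<cdot>\<^sub>m 1\<^sub>m (n * m) :: int mat)"
      "p' < dim_col (of_nat k \<cdot>\<^sub>m 1\<^sub>m (n * m) :: int mat)"
    then have p: "p < n * m" and p': "p' < n * m" by auto
    have a: "p div n < m" "p' div n < m" and r: "p mod n < n" "p' mod n < n"
      using p p' by (auto intro: div_less_of_less_mult mod_less_of_less_mult)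
    have "(block_W n m W K i * transpose_mat (block_W n m W K i)) $$ (p, p') =
        (\<Sum>b<m. W $$ (p div n, b) * W $$ (p' div n, b) * 1\<^sub>m n $$ (p mod n, p' mod n))"
      by (simp add: block_W_mult_transpose_index[where K = K and i = i and j = i, OF Kc Kc p p'] KK)
    also have "\<dots> = (if p mod n = p' mod n then (W * transpose_mat W) $$ (p div n, p' div n) else 0)"
      using r by (simp add: mult_transpose_mat_index[OF Wc Wc a])
    also have "\<dots> = (if p div n = p' div n \<and> p mod n = p' mod n then int k else 0)"
      using a by (simp add: WW)
    also have "\<dots> = (if p = p' then int k else 0)"
      by (simp only: div_mod_eq_iff[of p p' n, symmetric])
    also have "\<dots> = (of_nat k \<cdot>\<^sub>m 1\<^sub>m (n * m) :: int mat) $$ (p, p')"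
      using p p' by simp
    finally show "(block_W n m W K i * transpose_mat (block_W n m W K i)) $$ (p, p') =
        (of_nat k \<cdot>\<^sub>m 1\<^sub>m (n * m) :: int mat) $$ (p, p')" .
  qed (auto simp: block_W_def)
qed

lemma abs_sum_mult_le_one:
  fixes w q :: "'b \<Rightarrow> 'a::linordered_idom"
  assumes "\<And>b. b \<in> B \<Longrightarrow> \<bar>w b\<bar> \<le> 1" "\<And>b. b \<in> B \<Longrightarrow> 0 \<le> q b" "sum q B \<le> 1"
  shows "\<bar>\<Sum>b\<in>B. w b * q b\<bar> \<le> 1"
proof -
  have "\<bar>\<Sum>b\<in>B. w b * q b\<bar> \<le> (\<Sum>b\<in>B. \<bar>w b\<bar> * q b)"
    using sum_abs[of "\<lambda>b. w b * q b" B] assms(2) by (simp add: abs_mult)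
  also have "\<dots> \<le> sum q B"
    using assms(1,2) by (intro sum_mono) (simp add: mult_left_le_one_le)
  finally show ?thesis using assms(3) by simp
qed

lemma block_W_mult_transpose_entry:
  assumes W: "weighing_matrix m k W"
    and Ki: "\<And>b. b < m \<Longrightarrow> perm_matrix n (K i b)"
    and Kj: "\<And>b. b < m \<Longrightarrow> perm_matrix n (K j b)"
    and zero_one: "zero_one_mat (mat n n (\<lambda>(r, s). \<Sum>l<m. (K i l * transpose_mat (K j l)) $$ (r, s)))"
    and p: "p < n * m" and p': "p' < n * m"
  shows "(block_W n m W K i * transpose_mat (block_W n m W K j)) $$ (p, p') \<in> {0, 1, -1}"
proof -
  have Kic: "K i b \<in> carrier_mat n n" and Kjc: "K j b \<in> carrier_mat n n" if "b < m" for b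
    using Ki[OF that] Kj[OF that] by (auto intro: perm_matrix_carrier)
  define Q where "Q b = (K i b * transpose_mat (K j b)) $$ (p mod n, p' mod n)" for b
  have a: "p div n < m" "p' div n < m" and r: "p mod n < n" "p' mod n < n"
    using p p' by (auto intro: div_less_of_less_mult mod_less_of_less_mult)
  have "\<bar>\<Sum>b<m. W $$ (p div n, b) * W $$ (p' div n, b) * Q b\<bar> \<le> 1"
  proof (rule abs_sum_mult_le_one)
    fix b assume "b \<in> {..<m}"
    then have b: "b < m" by simp
    have "W $$ (p div n, b) \<in> {0, 1, -1}" "W $$ (p' div n, b) \<in> {0, 1, -1}"
      using W a b by (auto simp: weighing_matrix_def)
    then show "\<bar>W $$ (p div n, b) * W $$ (p' div n, b)\<bar> \<le> 1" by auto
    have "0 \<le> K i b $$ (p mod n, s) * K j b $$ (p' mod n, s)" if "s < n" for s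
      using perm_matrix_entry_01[OF Ki[OF b] r(1) that] perm_matrix_entry_01[OF Kj[OF b] r(2) that]
      by auto
    then show "0 \<le> Q b"
      by (auto simp: Q_def mult_transpose_mat_index[OF Kic[OF b] Kjc[OF b] r] intro!: sum_nonneg)
  next
    have "sum Q {..<m} \<in> {0, 1}"
      using zero_one r unfolding zero_one_mat_def Q_def by simp
    then show "sum Q {..<m} \<le> 1" by auto
  qed
  then show ?thesis
    by (auto simp: block_W_mult_transpose_index[where K = K and i = i and j = j, OF Kic Kjc p p'] Q_def)
qed

lemma transpose_mult_eq_smult_one:
  fixes A :: "'a::field mat"
  assumes A: "A \<in> carrier_mat n n" and AA: "A * transpose_mat A = c \<cdot>\<^sub>m 1\<^sub>m n" and c: "c \<noteq> 0"
  shows "transpose_mat A * A = c \<cdot>\<^sub>m 1\<^sub>m n"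
proof -
  have At: "transpose_mat A \<in> carrier_mat n n" using A by simp
  have "A * ((1 / c) \<cdot>\<^sub>m transpose_mat A) = (1 / c) \<cdot>\<^sub>m (c \<cdot>\<^sub>m 1\<^sub>m n)"
    unfolding mult_smult_distrib[OF A At] AA ..
  also have "\<dots> = 1\<^sub>m n"
    using c by (intro eq_matI) auto
  finally have "A * ((1 / c) \<cdot>\<^sub>m transpose_mat A) = 1\<^sub>m n" .
  then have "((1 / c) \<cdot>\<^sub>m transpose_mat A) * A = 1\<^sub>m n"
    by (rule mat_mult_left_right_inverse[OF A smult_carrier_mat[OF At]])
  then have "c \<cdot>\<^sub>m ((1 / c) \<cdot>\<^sub>m (transpose_mat A * A)) = c \<cdot>\<^sub>m 1\<^sub>m n"
    by (simp add: mult_smult_assoc_mat[OF At A])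
  moreover have "c \<cdot>\<^sub>m ((1 / c) \<cdot>\<^sub>m (transpose_mat A * A)) = transpose_mat A * A"
    using c by (intro eq_matI) auto
  ultimately show ?thesis by simp
qed

lemma weighing_matrix_mult_transpose:
  fixes A B :: "'a::field_char_0 mat"
  assumes A: "weighing_matrix n k A" and B: "weighing_matrix n k B" and k: "0 < k"
    and entries: "\<forall>i<n. \<forall>j<n. (A * transpose_mat B) $$ (i, j) \<in> {0, 1, -1}"
  shows "weighing_matrix n (k^2) (A * transpose_mat B)"
proof -
  have Ac: "A \<in> carrier_mat n n" and AA: "A * transpose_mat A = of_nat k \<cdot>\<^sub>m 1\<^sub>m n"
    and Bc: "B \<in> carrier_mat n n" and BB: "B * transpose_mat B = of_nat k \<cdot>\<^sub>m 1\<^sub>m n"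
    using A B by (auto simp: weighing_matrix_def)
  have BtB: "transpose_mat B * B = of_nat k \<cdot>\<^sub>m 1\<^sub>m n"
    using Bc BB k by (intro transpose_mult_eq_smult_one) auto
  have "(A * transpose_mat B) * transpose_mat (A * transpose_mat B) =
      A * (transpose_mat B * B) * transpose_mat A"
    using Ac Bc by (simp add: transpose_mult[of A n n] assoc_mult_mat[of _ n n _ n _ n])
  also have "\<dots> = of_nat k \<cdot>\<^sub>m (A * transpose_mat A)"
    using Ac by (simp add: BtB mult_smult_distrib[of _ n n _ n] mult_smult_assoc_mat[of _ n n _ n])
  also have "\<dots> = of_nat (k^2) \<cdot>\<^sub>m 1\<^sub>m n"
    by (auto simp: AA power2_eq_square intro!: eq_matI)
  finally show ?thesis
    using Ac Bc entries by (auto simp: weighing_matrix_def)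
qed

lemma of_int_mat_mult_transpose:
  fixes X Y :: "int mat"
  assumes "X \<in> carrier_mat nr n" "Y \<in> carrier_mat nc n"
  shows "map_mat of_int (X * transpose_mat Y) =
    map_mat (of_int :: int \<Rightarrow> 'a::comm_ring_1) X * transpose_mat (map_mat of_int Y)"
  using of_int_hom.mat_hom_mult[of X nr n "transpose_mat Y" nc] assms by (simp add: map_mat_transpose)

lemma of_int_mat_index_unit:
  assumes "X \<in> carrier_mat nr nc" "i < nr" "j < nc" "X $$ (i, j) \<in> {0, 1, -1}"
  shows "(map_mat (of_int :: int \<Rightarrow> 'a::comm_ring_1) X) $$ (i, j) \<in> {0, 1, -1}"
  using assms by auto

lemma weighing_matrix_of_int:
  assumes X: "weighing_matrix n k X"
  shows "weighing_matrix n k (map_mat (of_int :: int \<Rightarrow> 'a::comm_ring_1) X)"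
  unfolding weighing_matrix_def
proof (intro conjI allI impI)
  have Xc: "X \<in> carrier_mat n n" using X by (simp add: weighing_matrix_def)
  then show "(map_mat of_int X :: 'a mat) \<in> carrier_mat n n" by simp
  show "(map_mat of_int X :: 'a mat) $$ (i, j) \<in> {0, 1, -1}" if "i < n" "j < n" for i j
    using X that by (intro of_int_mat_index_unit[OF Xc]) (auto simp: weighing_matrix_def)
  have "map_mat of_int (of_nat k \<cdot>\<^sub>m 1\<^sub>m n) = (of_nat k \<cdot>\<^sub>m 1\<^sub>m n :: 'a mat)"
    by (auto intro!: eq_matI)
  with X show "(map_mat of_int X :: 'a mat) * transpose_mat (map_mat of_int X) =
      of_nat k \<cdot>\<^sub>m 1\<^sub>m n"
    by (simp add: weighing_matrix_def of_int_mat_mult_transpose[OF Xc Xc, symmetric])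
qed

lemma quasi_unbiased_1I:
  assumes A: "weighing_matrix n k A" and B: "weighing_matrix n k B" and k: "0 < k"
    and entries: "\<forall>i<n. \<forall>j<n. (A * transpose_mat B) $$ (i, j) \<in> {0, 1, -1}"
  shows "quasi_unbiased n k (k^2) 1 A B"
proof -
  have Ac: "A \<in> carrier_mat n n" and Bc: "B \<in> carrier_mat n n"
    using A B by (auto simp: weighing_matrix_def)
  have "weighing_matrix n (k^2) (map_mat real_of_int A * transpose_mat (map_mat real_of_int B))"
  proof (rule weighing_matrix_mult_transpose[OF weighing_matrix_of_int[OF A] weighing_matrix_of_int[OF B] k],
      intro allI impI)
    fix i j assume "i < n" "j < n"
    with Ac Bc entries
    show "(map_mat real_of_int A * transpose_mat (map_mat real_of_int B)) $$ (i, j) \<in> {0, 1, -1}"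
      unfolding of_int_mat_mult_transpose[OF Ac Bc, symmetric] by (intro of_int_mat_index_unit) auto
  qed
  moreover have "(1 / sqrt (real 1)) \<cdot>\<^sub>m M = M" for M :: "real mat"
    by (auto intro!: eq_matI)
  ultimately show ?thesis
    using A B by (simp add: quasi_unbiased_def)
qed

theorem lemma4p6:
  fixes n m k :: nat and W :: "int mat" and K :: "nat \<Rightarrow> nat \<Rightarrow> int mat"
  assumes "0 < n" and "0 < m" and "0 < k" and "m \<le> n"
    and "weighing_matrix m k W"
    and "\<And>i j. i < m \<Longrightarrow> j < m \<Longrightarrow> perm_matrix n (K i j)"
    and "\<And>i j. i < m \<Longrightarrow> j < m \<Longrightarrow> i \<noteq> j \<Longrightarrow>
           zero_one_mat (mat n n (\<lambda>(r,s). \<Sum>l<m. (K i l * transpose_mat (K j l)) $$ (r,s)))"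
  shows "(\<forall>i<m. weighing_matrix (n*m) k (block_W n m W K i)) \<and>
         (\<forall>i<m. \<forall>j<m. i \<noteq> j \<longrightarrow>
            quasi_unbiased (n*m) k (k^2) 1 (block_W n m W K i) (block_W n m W K j))"
proof -
  have weighing: "weighing_matrix (n*m) k (block_W n m W K i)" if "i < m" for i
    using that assms(6) by (intro weighing_matrix_block_W[OF assms(5)])
  have "quasi_unbiased (n*m) k (k^2) 1 (block_W n m W K i) (block_W n m W K j)"
    if "i < m" "j < m" "i \<noteq> j" for i j
    using that assms(6,7)
    by (intro quasi_unbiased_1I weighing assms(3) allI impI block_W_mult_transpose_entry[OF assms(5)])
  with weighing show ?thesis by blast
qed

end
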